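(* Let $(\mathfrak g,\{e_1,\dots,e_n\})$ be a nice nilpotent Lie algebra with root matrix $M_\Delta\in\mathbb R^{m\times n}$ and vector of (nonzero) structure constants $c=(c_1,\dots,c_m)\in\mathbb R^m$ (ordered as the rows of $M_\Delta$), let $b$ be a solution of $M_\Delta M_\Delta^T b=[1]$, let $\lambda\in\mathbb R$ and $\delta\in(\mathbb Z_2)^n$. There exists a diagonal metric on $\mathfrak g$ of signature $\delta$ with $\operatorname{Ric}=\lambda\,\mathrm{id}+D$ for some derivation $D$ if and only if there is a vector $X=(x_1,\dots,x_m)\in\mathbb R^m$ such that: (K) $X\in -2\lambda b+\ker M_\Delta^{T}$; (H) $x_h\neq 0$ for every $h=1,\dots,m$; (L) $\operatorname{logsign}X=M_{\Delta,2}\,\delta$; (P) for some (equivalently, every) choice of integer vectors $\alpha_1,\dots,\alpha_k\in\mathbb Z^m$ forming a basis of $\ker M_\Delta^T$, one has $X^{\alpha_i}=c^{2\alpha_i}$ for $i=1,\dots,k$, where for $\alpha=(a_1,\dots,a_m)$ we write $X^{\alpha}=\prod_{h=1}^m x_h^{a_h}$ and $c^{2\alpha}=\prod_{h=1}^m c_h^{2a_h}$.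
   Context: A nice Lie algebra is a Lie algebra $\mathfrak g$ with a basis $\{e_1,\dots,e_n\}$ (dual basis $\{e^i\}$) such that each $[e_i,e_j]$ is a multiple of some $e_k$ and each $e_i\lrcorner\, de^j$ is a multiple of some $e^k$ ($d$ the Chevalley–Eilenberg differential). Write $[e_i,e_j]=c_{ij}^ke_k$, $i<j$. The root matrix $M_\Delta$ has one row for each triple $(\{i,j\},k)$ with $[e_i,e_j]$ a nonzero multiple of $e_k$, with $+1$ in position $k$, $-1$ in positions $i,j$, $0$ elsewhere; the structure constant vector $c$ has entry $c_{ij}^k$ in the position of that row. $M_{\Delta,2}$ is the mod 2 reduction of $M_\Delta$; $[1]$ is the all-ones vector. A diagonal metric is $g=\sum g_ie^i\otimes e^i$, $g_i\neq0$; its signature is $\delta\in(\mathbb Z_2)^n$ with $\delta_i=0$ if $g_i>0$ and $\delta_i=1$ if $g_i<0$. For $X\in\mathbb R^m$ with nonzero entries, $\operatorname{logsign}X\in(\mathbb Z_2)^m$ has $h$-th entry $0$ if $x_h>0$ and $1$ if $x_h<0$. $\operatorname{Ric}$ is the Ricci operator of the left-invariant pseudo-Riemannian metric. *)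

theory Defs
  imports Complex_Main
begin

(* A real Lie algebra g of dimension n with basis e_0,...,e_{n-1} (indices < n) is encoded
   by its structure constants C: [e_a,e_b] = sum_k C a b k e_k. *)

type_synonym sconst = "nat \<Rightarrow> nat \<Rightarrow> nat \<Rightarrow> real"
type_synonym row = "nat \<times> nat \<times> nat"

definition vsp :: "nat \<Rightarrow> (nat \<Rightarrow> real) set" where
  "vsp n = {x. \<forall>i\<ge>n. x i = 0}"

definition ev :: "nat \<Rightarrow> nat \<Rightarrow> real" where
  "ev a = (\<lambda>i. if i = a then 1 else 0)"

definition brk :: "sconst \<Rightarrow> nat \<Rightarrow> (nat \<Rightarrow> real) \<Rightarrow> (nat \<Rightarrow> real) \<Rightarrow> nat \<Rightarrow> real" where
  "brk C n x y = (\<lambda>k. \<Sum>a<n. \<Sum>b<n. x a * y b * C a b k)"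

definition lie_algebra :: "sconst \<Rightarrow> nat \<Rightarrow> bool" where
  "lie_algebra C n \<longleftrightarrow>
     (\<forall>a b k. (a \<ge> n \<or> b \<ge> n \<or> k \<ge> n) \<longrightarrow> C a b k = 0) \<and>
     (\<forall>a b k. C a b k = - C b a k) \<and>
     (\<forall>x\<in>vsp n. \<forall>y\<in>vsp n. \<forall>z\<in>vsp n.
        (\<lambda>i. brk C n x (brk C n y z) i + brk C n y (brk C n z x) i + brk C n z (brk C n x y) i) = (\<lambda>i. 0))"

definition nilpotent :: "sconst \<Rightarrow> nat \<Rightarrow> bool" where
  "nilpotent C n \<longleftrightarrow> (\<exists>N. \<forall>xs y. length xs = N \<longrightarrow> set xs \<subseteq> vsp n \<longrightarrow> y \<in> vsp n \<longrightarrow>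
      foldr (brk C n) xs y = (\<lambda>i. 0))"

(* Chevalley-Eilenberg differential on 1-forms: de^j(x,y) = - e^j([x,y]);
   the contraction e_a \<lrcorner> de^j is the 1-form  e_l \<mapsto> de^j(e_a,e_l) = - C a l j. *)
definition contr_de :: "sconst \<Rightarrow> nat \<Rightarrow> nat \<Rightarrow> nat \<Rightarrow> nat \<Rightarrow> real" where
  "contr_de C n a j = (\<lambda>l. - brk C n (ev a) (ev l) j)"

definition nice :: "sconst \<Rightarrow> nat \<Rightarrow> bool" where
  "nice C n \<longleftrightarrow>
     (\<forall>a<n. \<forall>b<n. \<exists>k<n. \<exists>t::real. \<forall>i<n. brk C n (ev a) (ev b) i = t * ev k i) \<and>
     (\<forall>a<n. \<forall>j<n. \<exists>k<n. \<exists>t::real. \<forall>l<n. contr_de C n a j l = t * ev k l)"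

definition rows :: "sconst \<Rightarrow> nat \<Rightarrow> row set" where
  "rows C n = {(i,j,k). i < j \<and> j < n \<and> k < n \<and> C i j k \<noteq> 0}"

definition cvec :: "sconst \<Rightarrow> row \<Rightarrow> real" where
  "cvec C r = (case r of (i,j,k) \<Rightarrow> C i j k)"

definition rootM :: "row \<Rightarrow> nat \<Rightarrow> int" where
  "rootM r l = (case r of (i,j,k) \<Rightarrow>
      (if l = k then 1 else 0) - (if l = i then 1 else 0) - (if l = j then 1 else 0))"

definition rootMT_app :: "sconst \<Rightarrow> nat \<Rightarrow> (row \<Rightarrow> real) \<Rightarrow> nat \<Rightarrow> real" where
  "rootMT_app C n y = (\<lambda>l. \<Sum>r\<in>rows C n. of_int (rootM r l) * y r)"

definition in_ker_MT :: "sconst \<Rightarrow> nat \<Rightarrow> (row \<Rightarrow> real) \<Rightarrow> bool" where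
  "in_ker_MT C n y \<longleftrightarrow> (\<forall>l<n. rootMT_app C n y l = 0)"

definition solves_MMT :: "sconst \<Rightarrow> nat \<Rightarrow> (row \<Rightarrow> real) \<Rightarrow> bool" where
  "solves_MMT C n b \<longleftrightarrow>
     (\<forall>r\<in>rows C n. (\<Sum>l<n. of_int (rootM r l) * rootMT_app C n b l) = 1)"

definition int_basis_ker_MT :: "sconst \<Rightarrow> nat \<Rightarrow> nat \<Rightarrow> (nat \<Rightarrow> row \<Rightarrow> int) \<Rightarrow> bool" where
  "int_basis_ker_MT C n k \<alpha> \<longleftrightarrow>
     (\<forall>i<k. in_ker_MT C n (\<lambda>r. of_int (\<alpha> i r))) \<and>
     (\<forall>t::nat \<Rightarrow> real. (\<forall>r\<in>rows C n. (\<Sum>i<k. t i * of_int (\<alpha> i r)) = 0) \<longrightarrow> (\<forall>i<k. t i = 0)) \<and>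
     (\<forall>y. in_ker_MT C n y \<longrightarrow>
        (\<exists>t::nat \<Rightarrow> real. \<forall>r\<in>rows C n. y r = (\<Sum>i<k. t i * of_int (\<alpha> i r))))"

definition logsign :: "(row \<Rightarrow> real) \<Rightarrow> row \<Rightarrow> int" where
  "logsign X r = (if X r > 0 then 0 else 1)"

definition diag_metric :: "nat \<Rightarrow> (nat \<Rightarrow> real) \<Rightarrow> bool" where
  "diag_metric n g \<longleftrightarrow> (\<forall>i<n. g i \<noteq> 0)"

definition gm :: "nat \<Rightarrow> (nat \<Rightarrow> real) \<Rightarrow> (nat \<Rightarrow> real) \<Rightarrow> (nat \<Rightarrow> real) \<Rightarrow> real" where
  "gm n g x y = (\<Sum>i<n. g i * x i * y i)"

definition has_signature :: "nat \<Rightarrow> (nat \<Rightarrow> real) \<Rightarrow> (nat \<Rightarrow> int) \<Rightarrow> bool" where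
  "has_signature n g \<delta> \<longleftrightarrow> (\<forall>i<n. \<delta> i = (if g i > 0 then 0 else 1))"

(* Levi-Civita connection on left-invariant fields (Koszul formula):
   g(nabla_x y, z) = 1/2 (g([x,y],z) - g([y,z],x) + g([z,x],y)), solved in the g-orthogonal basis *)
definition lc :: "sconst \<Rightarrow> nat \<Rightarrow> (nat \<Rightarrow> real) \<Rightarrow> (nat \<Rightarrow> real) \<Rightarrow> (nat \<Rightarrow> real) \<Rightarrow> nat \<Rightarrow> real" where
  "lc C n g x y = (\<lambda>c. if c < n then
      (gm n g (brk C n x y) (ev c) - gm n g (brk C n y (ev c)) x + gm n g (brk C n (ev c) x) y)
        / (2 * g c)
     else 0)"

definition curv :: "sconst \<Rightarrow> nat \<Rightarrow> (nat \<Rightarrow> real) \<Rightarrow> (nat \<Rightarrow> real) \<Rightarrow> (nat \<Rightarrow> real) \<Rightarrow> (nat \<Rightarrow> real) \<Rightarrow> nat \<Rightarrow> real" where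
  "curv C n g x y z = (\<lambda>i. lc C n g x (lc C n g y z) i - lc C n g y (lc C n g x z) i
                          - lc C n g (brk C n x y) z i)"

definition ric :: "sconst \<Rightarrow> nat \<Rightarrow> (nat \<Rightarrow> real) \<Rightarrow> (nat \<Rightarrow> real) \<Rightarrow> (nat \<Rightarrow> real) \<Rightarrow> real" where
  "ric C n g y z = (\<Sum>a<n. curv C n g (ev a) y z a)"

(* Ricci operator: g(Ric y, z) = ric(y,z) *)
definition Ric :: "sconst \<Rightarrow> nat \<Rightarrow> (nat \<Rightarrow> real) \<Rightarrow> (nat \<Rightarrow> real) \<Rightarrow> nat \<Rightarrow> real" where
  "Ric C n g y = (\<lambda>c. if c < n then ric C n g y (ev c) / g c else 0)"

definition derivation :: "sconst \<Rightarrow> nat \<Rightarrow> ((nat \<Rightarrow> real) \<Rightarrow> nat \<Rightarrow> real) \<Rightarrow> bool" where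
  "derivation C n D \<longleftrightarrow>
     (\<forall>x\<in>vsp n. D x \<in> vsp n) \<and>
     (\<forall>x\<in>vsp n. \<forall>y\<in>vsp n. \<forall>t::real. D (\<lambda>i. t * x i + y i) = (\<lambda>i. t * D x i + D y i)) \<and>
     (\<forall>x\<in>vsp n. \<forall>y\<in>vsp n. D (brk C n x y) = (\<lambda>i. brk C n (D x) y i + brk C n x (D y) i))"

end

theory Submission
  imports Defs
begin

(* For a diagonal metric g on a nice nilpotent Lie algebra the Levi-Civita connection only
   involves the nonzero structure constants, and since a nilpotent algebra has no bracket cycles
   e_a -> e_c -> e_a, the Ricci operator is diagonal: Ric e_p = 1/2 (M^T X)_p e_p, where X is
   the vector with entries (c_ij^k)^2 g_k / (g_i g_j).  A diagonal map is a derivation iff its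
   eigenvalues are additive along the rows of the root matrix, so Ric - lam id is a derivation
   iff M M^T X = -2 lam [1], i.e. X lies in -2 lam b + ker M^T.
   Conversely, a vector X with nonzero entries is the vector of a diagonal metric of signature
   delta iff its signs are M_2 delta and log|X| - log c^2 lies in the image of M, and then
   g = +-exp u for a preimage u.  By the Fredholm alternative the image of M is the orthogonal
   complement of ker M^T, so the last condition says X^alpha = c^(2 alpha) on a basis alpha of
   ker M^T; integer bases exist by fraction-free Gaussian elimination. *)

section \<open>Coordinates of brackets and of the Levi-Civita connection\<close>

lemma ev_mult: "ev a i * (z::real) = (if i = a then z else 0)"
  by (simp add: ev_def)

lemma mult_ev: "(z::real) * ev a i = (if i = a then z else 0)"
  by (simp add: ev_def)

lemma if_zero_mult: "(if P then z else 0) * (w::real) = (if P then z * w else 0)"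
  by simp

lemma sum_if_zero: "(\<Sum>x\<in>A. if P then f x else 0) = (if P then sum f A else 0)"
  by simp

lemma ev_in_vsp: "a < n \<Longrightarrow> ev a \<in> vsp n"
  by (simp add: vsp_def ev_def)

lemma brk_ev_left: "a < n \<Longrightarrow> brk C n (ev a) y k = (\<Sum>b<n. y b * C a b k)"
  unfolding brk_def by (subst sum.swap) (simp add: ev_mult if_zero_mult)

lemma brk_ev_right: "b < n \<Longrightarrow> brk C n x (ev b) k = (\<Sum>a<n. x a * C a b k)"
  by (simp add: brk_def mult_ev if_zero_mult)

lemma brk_ev_ev: "a < n \<Longrightarrow> b < n \<Longrightarrow> brk C n (ev a) (ev b) k = C a b k"
  by (simp add: brk_ev_left ev_mult if_zero_mult)

lemma brk_scale_left: "brk C n (\<lambda>i. t * x i) y = (\<lambda>i. t * brk C n x y i)"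
  by (simp add: brk_def sum_distrib_left mult_ac)

lemma brk_scale_right: "brk C n x (\<lambda>i. t * y i) = (\<lambda>i. t * brk C n x y i)"
  by (simp add: brk_def sum_distrib_left mult_ac)

lemma gm_ev_right: "c < n \<Longrightarrow> gm n g x (ev c) = g c * x c"
  by (simp add: gm_def mult_ev)

definition christoffel :: "sconst \<Rightarrow> (nat \<Rightarrow> real) \<Rightarrow> nat \<Rightarrow> nat \<Rightarrow> nat \<Rightarrow> real" where
  "christoffel C g a b c = (g c * C a b c - g a * C b c a + g b * C c a b) / (2 * g c)"

lemma lc_eq_christoffel:
  assumes "c < n" "g c \<noteq> 0"
  shows "lc C n g x y c = (\<Sum>a<n. \<Sum>b<n. x a * y b * christoffel C g a b c)"
proof -
  have "gm n g (brk C n x y) (ev c) = (\<Sum>a<n. \<Sum>b<n. x a * y b * (g c * C a b c))"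
    using assms by (simp add: gm_ev_right brk_def sum_distrib_left mult_ac)
  moreover have "gm n g (brk C n y (ev c)) x = (\<Sum>a<n. \<Sum>b<n. x a * y b * (g a * C b c a))"
    using assms by (simp add: gm_def brk_ev_right sum_distrib_left sum_distrib_right mult_ac)
  moreover have "gm n g (brk C n (ev c) x) y = (\<Sum>a<n. \<Sum>b<n. x a * y b * (g b * C c a b))"
    using assms by (simp add: gm_def brk_ev_left sum_distrib_left sum_distrib_right mult_ac)
      (rule sum.swap)
  ultimately show ?thesis
    using assms unfolding lc_def christoffel_def
    by (simp add: sum_subtractf[symmetric] sum.distrib[symmetric] sum_divide_distrib
        add_divide_distrib diff_divide_distrib algebra_simps)
qed

lemma lc_ev_left:
  "a < n \<Longrightarrow> c < n \<Longrightarrow> g c \<noteq> 0 \<Longrightarrow> lc C n g (ev a) y c = (\<Sum>b<n. y b * christoffel C g a b c)"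
  by (simp add: lc_eq_christoffel ev_mult if_zero_mult mult.assoc) (subst sum.swap, simp)

lemma lc_ev_right:
  "b < n \<Longrightarrow> c < n \<Longrightarrow> g c \<noteq> 0 \<Longrightarrow> lc C n g x (ev b) c = (\<Sum>a<n. x a * christoffel C g a b c)"
  by (simp add: lc_eq_christoffel mult_ev if_zero_mult)

lemma lc_ev_ev:
  "a < n \<Longrightarrow> b < n \<Longrightarrow> c < n \<Longrightarrow> g c \<noteq> 0 \<Longrightarrow> lc C n g (ev a) (ev b) c = christoffel C g a b c"
  by (simp add: lc_ev_left ev_mult)

definition ricci_coeff :: "sconst \<Rightarrow> (nat \<Rightarrow> real) \<Rightarrow> nat \<Rightarrow> nat \<Rightarrow> nat \<Rightarrow> real" where
  "ricci_coeff C g n p q = (\<Sum>a<n. \<Sum>c<n.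
     christoffel C g p q c * christoffel C g a c a - christoffel C g a q c * christoffel C g p c a
     - C a p c * christoffel C g c q a)"

lemma sum_sum_sum_factor:
  "(\<Sum>a\<in>A. \<Sum>c\<in>B. \<Sum>p\<in>P. y p * F a c p) = (\<Sum>p\<in>P. (y p :: real) * (\<Sum>a\<in>A. \<Sum>c\<in>B. F a c p))"
proof -
  have "(\<Sum>a\<in>A. \<Sum>c\<in>B. \<Sum>p\<in>P. y p * F a c p) = (\<Sum>p\<in>P. \<Sum>a\<in>A. \<Sum>c\<in>B. y p * F a c p)"
    by (subst sum.swap, subst (2) sum.swap) simp
  then show ?thesis by (simp add: sum_distrib_left)
qed

lemma ric_ev_right:
  assumes g: "\<forall>i<n. g i \<noteq> 0" and q: "q < n"
  shows "ric C n g y (ev q) = (\<Sum>p<n. y p * ricci_coeff C g n p q)"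
proof -
  let ?\<Gamma> = "christoffel C g"
  have trace_xy: "(\<Sum>a<n. lc C n g (ev a) (lc C n g y (ev q)) a)
      = (\<Sum>a<n. \<Sum>c<n. \<Sum>p<n. y p * (?\<Gamma> p q c * ?\<Gamma> a c a))"
    using g q by (intro sum.cong refl)
      (simp add: lc_ev_left lc_ev_right sum_distrib_left sum_distrib_right mult_ac)
  have trace_yx: "(\<Sum>a<n. lc C n g y (lc C n g (ev a) (ev q)) a)
      = (\<Sum>a<n. \<Sum>c<n. \<Sum>p<n. y p * (?\<Gamma> a q c * ?\<Gamma> p c a))"
  proof (intro sum.cong refl)
    fix a assume "a \<in> {..<n}"
    with g q show "lc C n g y (lc C n g (ev a) (ev q)) a
        = (\<Sum>c<n. \<Sum>p<n. y p * (?\<Gamma> a q c * ?\<Gamma> p c a))"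
      by (simp add: lc_eq_christoffel[of a n g C y] lc_ev_ev mult_ac) (rule sum.swap)
  qed
  have trace_bracket: "(\<Sum>a<n. lc C n g (brk C n (ev a) y) (ev q) a)
      = (\<Sum>a<n. \<Sum>c<n. \<Sum>p<n. y p * (C a p c * ?\<Gamma> c q a))"
    using g q by (intro sum.cong refl) (simp add: lc_ev_right brk_ev_left sum_distrib_left mult_ac)
  have "ric C n g y (ev q) = (\<Sum>a<n. lc C n g (ev a) (lc C n g y (ev q)) a)
      - (\<Sum>a<n. lc C n g y (lc C n g (ev a) (ev q)) a) - (\<Sum>a<n. lc C n g (brk C n (ev a) y) (ev q) a)"
    unfolding ric_def curv_def by (simp add: sum_subtractf)
  also have "\<dots> = (\<Sum>a<n. \<Sum>c<n. \<Sum>p<n. y p * (?\<Gamma> p q c * ?\<Gamma> a c a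
      - ?\<Gamma> a q c * ?\<Gamma> p c a - C a p c * ?\<Gamma> c q a))"
    unfolding trace_xy trace_yx trace_bracket by (simp add: sum_subtractf right_diff_distrib)
  finally show ?thesis
    unfolding ricci_coeff_def sum_sum_sum_factor .
qed

lemma sum_antisym_zero: "(\<Sum>a\<in>A. \<Sum>c\<in>A. f a c - f c a) = (0::real)"
  using sum.swap[of "\<lambda>a c. f c a" A A] by (simp add: sum_subtractf)

(* After summation over a and c the phi, psi and chi terms cancel; the last two terms vanish
   when there are no bracket 2-cycles. *)
lemma christoffel_product_expansion:
  fixes C :: sconst and p q :: nat
  assumes g: "g a \<noteq> 0" "g c \<noteq> 0"
    and AS: "\<And>a b k. C a b k = - C b a k"
  defines "\<phi> \<equiv> \<lambda>a c. g p / (4 * g a) * C a q c * C a c p"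
    and "\<psi> \<equiv> \<lambda>a c. g c / (4 * g a) * C a q c * C a p c"
    and "\<chi> \<equiv> \<lambda>a c. g q / (4 * g a) * C a c q * C a p c"
  shows "- christoffel C g a q c * christoffel C g p c a - C a p c * christoffel C g c q a
    = (g p * g q * C a c p * C a c q / (4 * g a * g c) - g c * C a p c * C a q c / (2 * g a))
      + (\<phi> c a - \<phi> a c) + (\<psi> c a - \<psi> a c) + (\<chi> c a - \<chi> a c)
      + C a q c * C c p a / 4 - 3 * (C c q a * C a p c) / 4"
proof -
  have "C q c a = - C c q a" "C p c a = - C c p a" "C c a q = - C a c q" "C c a p = - C a c p"
    "C q a c = - C a q c" "C p a c = - C a p c"
    using AS by blast+
  then show ?thesis
    unfolding christoffel_def \<phi>_def \<psi>_def \<chi>_def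
    using g by (simp add: field_simps)
qed

section \<open>Nice nilpotent Lie algebras\<close>

lemma lie_algebra_antisym: "lie_algebra C n \<Longrightarrow> C a b k = - C b a k"
  unfolding lie_algebra_def by blast

lemma lie_algebra_eq_0_outside: "lie_algebra C n \<Longrightarrow> n \<le> a \<or> n \<le> b \<or> n \<le> k \<Longrightarrow> C a b k = 0"
  unfolding lie_algebra_def by blast

lemma brk_in_vsp: "lie_algebra C n \<Longrightarrow> brk C n x y \<in> vsp n"
  by (simp add: vsp_def brk_def lie_algebra_eq_0_outside)

lemma foldr_brk_zero: "foldr (brk C n) xs (\<lambda>i. 0) = (\<lambda>i. 0)"
  by (induction xs) (simp_all add: brk_def)

lemma nilpotent_ad_ad_eigenvalue:
  assumes nil: "nilpotent C n" and vsp: "x \<in> vsp n" "y \<in> vsp n" "w \<in> vsp n"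
    and eigen: "brk C n x (brk C n y w) = (\<lambda>i. t * w i)" and nonzero: "w j \<noteq> 0"
  shows "t = 0"
proof -
  obtain N where N: "\<And>xs z. length xs = N \<Longrightarrow> set xs \<subseteq> vsp n \<Longrightarrow> z \<in> vsp n \<Longrightarrow>
      foldr (brk C n) xs z = (\<lambda>i. 0)"
    using nil unfolding nilpotent_def by blast
  define xs where "xs = concat (replicate N [x, y])"
  have power: "foldr (brk C n) (concat (replicate M [x, y])) w = (\<lambda>i. t ^ M * w i)" for M
  proof (induction M)
    case (Suc M)
    then have "foldr (brk C n) (concat (replicate (Suc M) [x, y])) w
        = brk C n x (brk C n y (\<lambda>i. t ^ M * w i))"
      by simp
    also have "\<dots> = (\<lambda>i. t ^ Suc M * w i)"
      by (simp only: brk_scale_right eigen) (simp add: mult_ac)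
    finally show ?case .
  qed simp
  have "length xs = 2 * N" "set xs \<subseteq> vsp n"
    using vsp unfolding xs_def by (induction N) auto
  then have "foldr (brk C n) (drop N xs) w = (\<lambda>i. 0)"
    using N vsp(3) set_drop_subset[of N xs] by simp
  then have "foldr (brk C n) xs w = (\<lambda>i. 0)"
    by (metis append_take_drop_id foldr_append foldr_brk_zero)
  then have "t ^ N * w j = 0"
    using power[of N] unfolding xs_def by metis
  with nonzero show ?thesis by simp
qed

locale nice_nilpotent =
  fixes C :: sconst and n :: nat
  assumes lie: "lie_algebra C n" and nice: "nice C n" and nilpotent: "nilpotent C n"
begin

lemma antisym: "C a b k = - C b a k"
  using lie by (rule lie_algebra_antisym)

lemma bracket_indices_less: "C a b k \<noteq> 0 \<Longrightarrow> a < n \<and> b < n \<and> k < n"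
  using lie lie_algebra_eq_0_outside by (meson not_less)

lemma bracket_target_unique: "C i j k \<noteq> 0 \<Longrightarrow> C i j k' \<noteq> 0 \<Longrightarrow> k = k'"
proof -
  assume nz: "C i j k \<noteq> 0" "C i j k' \<noteq> 0"
  then have idx: "i < n" "j < n" "k < n" "k' < n"
    using bracket_indices_less by blast+
  then obtain m t where "\<forall>l<n. brk C n (ev i) (ev j) l = t * ev m l"
    using nice unfolding nice_def by blast
  then have "C i j k = t * ev m k" "C i j k' = t * ev m k'"
    using idx by (simp_all add: brk_ev_ev)
  with nz show "k = k'" by (simp add: ev_def split: if_splits)
qed

lemma bracket_source_unique: "C i l k \<noteq> 0 \<Longrightarrow> C i l' k \<noteq> 0 \<Longrightarrow> l = l'"
proof -
  assume nz: "C i l k \<noteq> 0" "C i l' k \<noteq> 0"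
  then have idx: "i < n" "l < n" "l' < n" "k < n"
    using bracket_indices_less by blast+
  then obtain m t where "\<forall>l<n. contr_de C n i k l = t * ev m l"
    using nice unfolding nice_def by blast
  then have "- C i l k = t * ev m l" "- C i l' k = t * ev m l'"
    using idx by (simp_all add: contr_de_def brk_ev_ev)
  with nz show "l = l'" by (simp add: ev_def split: if_splits)
qed

lemma brk_ev_ev_eq_single: "C a b k \<noteq> 0 \<Longrightarrow> brk C n (ev a) (ev b) = (\<lambda>i. C a b k * ev k i)"
proof
  fix i assume nz: "C a b k \<noteq> 0"
  then have "a < n" "b < n" using bracket_indices_less by blast+
  moreover have "C a b i = C a b k * ev k i"
    using bracket_target_unique[OF nz, of i] by (auto simp: ev_def)
  ultimately show "brk C n (ev a) (ev b) i = C a b k * ev k i"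
    by (simp add: brk_ev_ev)
qed

lemma bracket_no_loop: "C c a a = 0"
proof (rule ccontr)
  assume nz: "C c a a \<noteq> 0"
  then have idx: "a < n" "c < n" using bracket_indices_less by blast+
  have "brk C n (ev c) (brk C n (ev c) (ev a)) = (\<lambda>i. (C c a a * C c a a) * ev a i)"
    by (simp only: brk_ev_ev_eq_single[OF nz] brk_scale_right) (simp add: mult_ac)
  from nilpotent_ad_ad_eigenvalue[OF nilpotent ev_in_vsp ev_in_vsp ev_in_vsp this, of a] idx nz
  show False by (simp add: ev_def)
qed

lemma bracket_no_2cycle: "C a b c * C c d a = 0"
proof (rule ccontr)
  assume "C a b c * C c d a \<noteq> 0"
  then have nz: "C b a c \<noteq> 0" "C d c a \<noteq> 0"
    using antisym[of a b c] antisym[of c d a] by auto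
  then have idx: "a < n" "b < n" "d < n" using bracket_indices_less by blast+
  have "brk C n (ev d) (brk C n (ev b) (ev a)) = (\<lambda>i. (C b a c * C d c a) * ev a i)"
    by (simp only: brk_ev_ev_eq_single[OF nz(1)] brk_ev_ev_eq_single[OF nz(2)] brk_scale_right)
      (simp add: mult_ac)
  from nilpotent_ad_ad_eigenvalue[OF nilpotent ev_in_vsp ev_in_vsp ev_in_vsp this, of a] idx nz
  show False by (simp add: ev_def)
qed

lemma christoffel_trace: "christoffel C g a c a = 0"
  using antisym[of a a c] antisym[of a c a] bracket_no_loop[of c a]
  by (simp add: christoffel_def)

end

section \<open>The Ricci operator of a diagonal metric\<close>

lemma finite_rows: "finite (rows C n)"
  by (rule finite_subset[of _ "{..<n} \<times> {..<n} \<times> {..<n}"]) (auto simp: rows_def)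

definition metric_vector :: "sconst \<Rightarrow> (nat \<Rightarrow> real) \<Rightarrow> row \<Rightarrow> real" where
  "metric_vector C g = (\<lambda>(i, j, k). (C i j k)\<^sup>2 * g k / (g i * g j))"

definition diag_op :: "nat \<Rightarrow> (nat \<Rightarrow> real) \<Rightarrow> (nat \<Rightarrow> real) \<Rightarrow> nat \<Rightarrow> real" where
  "diag_op n d x = (\<lambda>c. if c < n then d c * x c else 0)"

lemma sum_rootM_triples:
  fixes h :: "row \<Rightarrow> real"
  assumes sym: "\<And>i j k. h (i, j, k) = h (j, i, k)" and p: "p < n"
  shows "(\<Sum>i<n. \<Sum>j<n. \<Sum>k<n. of_int (rootM (i, j, k) p) * h (i, j, k))
    = (\<Sum>a<n. \<Sum>c<n. h (a, c, p)) - 2 * (\<Sum>a<n. \<Sum>c<n. h (a, p, c))"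
proof -
  have "of_int (rootM (i, j, k) p) * h (i, j, k)
      = (if k = p then h (i, j, k) else 0) - (if i = p then h (i, j, k) else 0)
        - (if j = p then h (i, j, k) else 0)" for i j k
    by (simp add: rootM_def)
  then have "(\<Sum>i<n. \<Sum>j<n. \<Sum>k<n. of_int (rootM (i, j, k) p) * h (i, j, k))
      = (\<Sum>i<n. \<Sum>j<n. h (i, j, p)) - (\<Sum>j<n. \<Sum>k<n. h (p, j, k)) - (\<Sum>i<n. \<Sum>k<n. h (i, p, k))"
    using p by (simp add: sum_subtractf sum_if_zero)
  also have "(\<Sum>j<n. \<Sum>k<n. h (p, j, k)) = (\<Sum>a<n. \<Sum>c<n. h (a, p, c))"
    using sym by simp
  finally show ?thesis by simp
qed

context nice_nilpotent
begin

lemma ricci_coeff_eq: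
  assumes g: "\<forall>i<n. g i \<noteq> 0"
  shows "ricci_coeff C g n p q = (\<Sum>a<n. \<Sum>c<n.
    g p * g q * C a c p * C a c q / (4 * g a * g c) - g c * C a p c * C a q c / (2 * g a))"
proof -
  define \<phi> where "\<phi> = (\<lambda>a c. g p / (4 * g a) * C a q c * C a c p)"
  define \<psi> where "\<psi> = (\<lambda>a c. g c / (4 * g a) * C a q c * C a p c)"
  define \<chi> where "\<chi> = (\<lambda>a c. g q / (4 * g a) * C a c q * C a p c)"
  have "ricci_coeff C g n p q = (\<Sum>a<n. \<Sum>c<n.
      (g p * g q * C a c p * C a c q / (4 * g a * g c) - g c * C a p c * C a q c / (2 * g a))
      + ((\<phi> c a - \<phi> a c) + (\<psi> c a - \<psi> a c) + (\<chi> c a - \<chi> a c)))"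
    unfolding ricci_coeff_def
  proof (intro sum.cong refl)
    fix a c assume "a \<in> {..<n}" "c \<in> {..<n}"
    then have "g a \<noteq> 0" "g c \<noteq> 0" using g by auto
    from christoffel_product_expansion[where C = C and p = p and q = q, OF this antisym]
    show "christoffel C g p q c * christoffel C g a c a - christoffel C g a q c * christoffel C g p c a
        - C a p c * christoffel C g c q a
      = (g p * g q * C a c p * C a c q / (4 * g a * g c) - g c * C a p c * C a q c / (2 * g a))
        + ((\<phi> c a - \<phi> a c) + (\<psi> c a - \<psi> a c) + (\<chi> c a - \<chi> a c))"
      unfolding \<phi>_def \<psi>_def \<chi>_def christoffel_trace
      by (simp add: bracket_no_2cycle[of a q c p] bracket_no_2cycle[of c q a p])
  qed
  also have "\<dots> = (\<Sum>a<n. \<Sum>c<n.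
      g p * g q * C a c p * C a c q / (4 * g a * g c) - g c * C a p c * C a q c / (2 * g a))"
    by (simp add: sum.distrib sum_antisym_zero)
  finally show ?thesis .
qed

lemma ricci_coeff_offdiag:
  assumes "\<forall>i<n. g i \<noteq> 0" "p \<noteq> q"
  shows "ricci_coeff C g n p q = 0"
proof -
  have prod_zero: "C a c p * C a c q = 0" "C a p c * C a q c = 0" for a c
    using bracket_target_unique[of a c p q] bracket_source_unique[of a p c q] assms(2) by auto
  show ?thesis
    unfolding ricci_coeff_eq[OF assms(1)] by (simp add: prod_zero mult.assoc)
qed

lemma sum_triples_eq_twice_rows:
  assumes sym: "\<And>i j k. F (i, j, k) = F (j, i, k)"
    and supp: "\<And>i j k. C i j k = 0 \<Longrightarrow> F (i, j, k) = (0::real)"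
  shows "(\<Sum>i<n. \<Sum>j<n. \<Sum>k<n. F (i, j, k)) = 2 * (\<Sum>r\<in>rows C n. F r)"
proof -
  define swap :: "row \<Rightarrow> row" where "swap = (\<lambda>(i, j, k). (j, i, k))"
  have "(\<Sum>i<n. \<Sum>j<n. \<Sum>k<n. F (i, j, k)) = (\<Sum>r\<in>{..<n} \<times> {..<n} \<times> {..<n}. F r)"
    by (simp add: sum.cartesian_product)
  also have "\<dots> = (\<Sum>r\<in>rows C n \<union> swap ` rows C n. F r)"
  proof (rule sum.mono_neutral_right)
    show "rows C n \<union> swap ` rows C n \<subseteq> {..<n} \<times> {..<n} \<times> {..<n}"
      by (auto simp: rows_def swap_def)
    show "\<forall>r\<in>{..<n} \<times> {..<n} \<times> {..<n} - (rows C n \<union> swap ` rows C n). F r = 0"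
    proof
      fix r assume r: "r \<in> {..<n} \<times> {..<n} \<times> {..<n} - (rows C n \<union> swap ` rows C n)"
      obtain i j k where ijk: "r = (i, j, k)" by (cases r)
      have "C i j k = 0"
        using r antisym[of i i k] antisym[of j i k] linorder_neq_iff[of i j]
        by (force simp: ijk rows_def swap_def image_iff)
      then show "F r = 0" unfolding ijk by (rule supp)
    qed
  qed simp
  also have "\<dots> = (\<Sum>r\<in>rows C n. F r) + (\<Sum>r\<in>swap ` rows C n. F r)"
    by (rule sum.union_disjoint) (use finite_rows in \<open>auto simp: rows_def swap_def\<close>)
  also have "(\<Sum>r\<in>swap ` rows C n. F r) = (\<Sum>r\<in>rows C n. F (swap r))"
    by (rule sum.reindex_cong[of swap]) (auto simp: inj_on_def swap_def)
  also have "\<dots> = (\<Sum>r\<in>rows C n. F r)"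
    by (rule sum.cong) (auto simp: swap_def sym)
  finally show ?thesis by simp
qed

lemma ricci_coeff_diag:
  assumes g: "\<forall>i<n. g i \<noteq> 0" and p: "p < n"
  shows "ricci_coeff C g n p p / g p = rootMT_app C n (metric_vector C g) p / 2"
proof -
  let ?X = "metric_vector C g"
  have X_sym: "?X (i, j, k) = ?X (j, i, k)" for i j k
    using antisym[of i j k] by (simp add: metric_vector_def mult.commute)
  have "ricci_coeff C g n p p / g p = (\<Sum>a<n. \<Sum>c<n. ?X (a, c, p) / 4 - ?X (a, p, c) / 2)"
    unfolding ricci_coeff_eq[OF g] sum_divide_distrib
    using g p by (intro sum.cong refl) (simp add: metric_vector_def field_simps power2_eq_square)
  also have "\<dots> = (\<Sum>i<n. \<Sum>j<n. \<Sum>k<n. of_int (rootM (i, j, k) p) * ?X (i, j, k)) / 4"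
    unfolding sum_rootM_triples[of ?X, OF X_sym p] by (simp add: sum_subtractf sum_divide_distrib[symmetric])
  also have "\<dots> = (\<Sum>r\<in>rows C n. of_int (rootM r p) * ?X r) / 2"
  proof -
    have "(\<Sum>i<n. \<Sum>j<n. \<Sum>k<n. of_int (rootM (i, j, k) p) * ?X (i, j, k))
        = 2 * (\<Sum>r\<in>rows C n. of_int (rootM r p) * ?X r)"
    proof (rule sum_triples_eq_twice_rows[of "\<lambda>r. of_int (rootM r p) * ?X r"])
      show "of_int (rootM (i, j, k) p) * ?X (i, j, k) = of_int (rootM (j, i, k) p) * ?X (j, i, k)"
        for i j k
        using X_sym[of i j k] by (simp add: rootM_def)
      show "C i j k = 0 \<Longrightarrow> of_int (rootM (i, j, k) p) * ?X (i, j, k) = 0" for i j k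
        by (simp add: metric_vector_def)
    qed
    then show ?thesis by simp
  qed
  finally show ?thesis by (simp add: rootMT_app_def)
qed

lemma Ric_eq_diag_op:
  assumes g: "diag_metric n g"
  shows "Ric C n g x = diag_op n (\<lambda>l. rootMT_app C n (metric_vector C g) l / 2) x"
proof
  fix c
  have g': "\<forall>i<n. g i \<noteq> 0" using g by (simp add: diag_metric_def)
  show "Ric C n g x c = diag_op n (\<lambda>l. rootMT_app C n (metric_vector C g) l / 2) x c"
  proof (cases "c < n")
    case True
    have "ric C n g x (ev c) = (\<Sum>p<n. if p = c then x p * ricci_coeff C g n p c else 0)"
      unfolding ric_ev_right[OF g' True] using ricci_coeff_offdiag[OF g'] by (intro sum.cong) auto
    then have "Ric C n g x c = x c * (ricci_coeff C g n c c / g c)"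
      using True by (simp add: Ric_def)
    then show ?thesis
      using True by (simp add: ricci_coeff_diag[OF g' True] diag_op_def)
  qed (simp add: Ric_def diag_op_def)
qed

end

section \<open>Diagonal derivations and the equation Ric = lam id + D\<close>

lemma rootM_apply:
  fixes f :: "nat \<Rightarrow> 'a::comm_ring_1"
  assumes "i < n" "j < n" "k < n"
  shows "(\<Sum>l<n. of_int (rootM (i, j, k) l) * f l) = f k - f i - f j"
proof -
  have "of_int (rootM (i, j, k) l) * f l
      = (if l = k then f l else 0) - (if l = i then f l else 0) - (if l = j then f l else 0)" for l
    by (simp add: rootM_def)
  then show ?thesis
    using assms by (simp add: sum_subtractf)
qed

lemma diag_op_ev: "a < n \<Longrightarrow> diag_op n d (ev a) = (\<lambda>c. d a * ev a c)"
  by (auto simp: diag_op_def ev_def)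

lemma diag_op_vsp_cong: "x \<in> vsp n \<Longrightarrow> diag_op n d x = (\<lambda>c. d c * x c)"
  by (auto simp: diag_op_def vsp_def)

lemma derivation_cong:
  assumes lie: "lie_algebra C n" and eq: "\<forall>x\<in>vsp n. D x = D' x"
  shows "derivation C n D \<longleftrightarrow> derivation C n D'"
proof -
  have lin: "(\<lambda>i. t * x i + y i) \<in> vsp n" if "x \<in> vsp n" "y \<in> vsp n" for t x y
    using that by (simp add: vsp_def)
  show ?thesis
    unfolding derivation_def by (simp add: eq lin brk_in_vsp[OF lie])
qed

context nice_nilpotent
begin

lemma bracket_rows_relation:
  fixes d :: "nat \<Rightarrow> real"
  assumes rows: "\<forall>(i, j, k)\<in>rows C n. d k = d i + d j" and nz: "C a b c \<noteq> 0"
  shows "d c = d a + d b"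
proof -
  have idx: "a < n" "b < n" "c < n" using bracket_indices_less[OF nz] by auto
  consider "a < b" | "b < a" | "a = b" by linarith
  then show ?thesis
  proof cases
    case 1
    then have "(a, b, c) \<in> rows C n" using nz idx by (simp add: rows_def)
    from bspec[OF rows this] show ?thesis by simp
  next
    case 2
    then have "(b, a, c) \<in> rows C n" using nz idx antisym[of a b c] by (simp add: rows_def)
    from bspec[OF rows this] show ?thesis by (simp add: add.commute)
  next
    case 3
    with nz antisym[of a a c] show ?thesis by simp
  qed
qed

lemma derivation_diag_op_imp_rows:
  assumes der: "derivation C n (diag_op n d)" and row: "(i, j, k) \<in> rows C n"
  shows "d k = d i + d j"
proof -
  have ijk: "i < n" "j < n" "k < n" "C i j k \<noteq> 0" using row by (simp_all add: rows_def)
  have "diag_op n d (brk C n (ev i) (ev j)) k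
      = brk C n (diag_op n d (ev i)) (ev j) k + brk C n (ev i) (diag_op n d (ev j)) k"
    using der ev_in_vsp ijk unfolding derivation_def by metis
  then have "d k * C i j k = (d i + d j) * C i j k"
    using ijk brk_in_vsp[OF lie, of "ev i" "ev j"]
    by (simp only: diag_op_ev brk_scale_left brk_scale_right diag_op_vsp_cong)
      (simp add: brk_ev_ev algebra_simps)
  with ijk show "d k = d i + d j" by simp
qed

lemma derivation_diag_op_if_rows:
  assumes rows: "\<forall>(i, j, k)\<in>rows C n. d k = d i + d j"
  shows "derivation C n (diag_op n d)"
proof -
  have "diag_op n d (brk C n x y) c = brk C n (diag_op n d x) y c + brk C n x (diag_op n d y) c"
    if x: "x \<in> vsp n" and y: "y \<in> vsp n" for x y c
  proof (cases "c < n")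
    case True
    have "brk C n (diag_op n d x) y c + brk C n x (diag_op n d y) c
        = (\<Sum>a<n. \<Sum>b<n. x a * y b * C a b c * (d a + d b))"
      unfolding diag_op_vsp_cong[OF x] diag_op_vsp_cong[OF y] brk_def
      by (simp only: sum.distrib[symmetric]) (simp add: algebra_simps)
    also have "\<dots> = (\<Sum>a<n. \<Sum>b<n. x a * y b * C a b c * d c)"
      using bracket_rows_relation[OF rows] by (intro sum.cong refl) (metis mult_eq_0_iff)
    finally show ?thesis
      using True by (simp add: diag_op_def brk_def sum_distrib_left mult_ac)
  qed (simp add: diag_op_def brk_def lie_algebra_eq_0_outside[OF lie])
  then show ?thesis
    unfolding derivation_def by (auto simp: diag_op_def vsp_def fun_eq_iff algebra_simps)
qed

lemma derivation_diag_op_iff: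
  "derivation C n (diag_op n d) \<longleftrightarrow> (\<forall>(i, j, k)\<in>rows C n. d k = d i + d j)"
  using derivation_diag_op_imp_rows derivation_diag_op_if_rows by blast

end

lemma rootMT_app_affine:
  "rootMT_app C n (\<lambda>r. t * b r + y r) l = t * rootMT_app C n b l + rootMT_app C n y l"
  by (simp add: rootMT_app_def algebra_simps sum.distrib sum_distrib_left)

lemma sum_rootMT_app_squares:
  "(\<Sum>l<n. (rootMT_app C n y l)\<^sup>2)
    = (\<Sum>r\<in>rows C n. y r * (\<Sum>l<n. of_int (rootM r l) * rootMT_app C n y l))"
proof -
  have "(\<Sum>l<n. (rootMT_app C n y l)\<^sup>2)
      = (\<Sum>l<n. \<Sum>r\<in>rows C n. y r * (of_int (rootM r l) * rootMT_app C n y l))"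
    by (simp add: power2_eq_square rootMT_app_def sum_distrib_right mult_ac)
  also have "\<dots> = (\<Sum>r\<in>rows C n. y r * (\<Sum>l<n. of_int (rootM r l) * rootMT_app C n y l))"
    by (subst sum.swap) (simp add: sum_distrib_left)
  finally show ?thesis .
qed

lemma affine_kernel_iff:
  assumes b: "solves_MMT C n b"
  shows "(\<exists>y. in_ker_MT C n y \<and> (\<forall>r\<in>rows C n. X r = t * b r + y r))
    \<longleftrightarrow> (\<forall>r\<in>rows C n. (\<Sum>l<n. of_int (rootM r l) * rootMT_app C n X l) = t)"
proof
  assume "\<exists>y. in_ker_MT C n y \<and> (\<forall>r\<in>rows C n. X r = t * b r + y r)"
  then obtain y where y: "in_ker_MT C n y" "\<forall>r\<in>rows C n. X r = t * b r + y r" by blast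
  have "rootMT_app C n X l = t * rootMT_app C n b l" if "l < n" for l
  proof -
    have "rootMT_app C n X l = rootMT_app C n (\<lambda>r. t * b r + y r) l"
      using y(2) by (simp add: rootMT_app_def)
    then show ?thesis
      using y(1) that by (simp add: rootMT_app_affine in_ker_MT_def)
  qed
  then show "\<forall>r\<in>rows C n. (\<Sum>l<n. of_int (rootM r l) * rootMT_app C n X l) = t"
    using b by (simp add: solves_MMT_def mult.left_commute[of _ t] sum_distrib_left[symmetric])
next
  assume MX: "\<forall>r\<in>rows C n. (\<Sum>l<n. of_int (rootM r l) * rootMT_app C n X l) = t"
  define y where "y = (\<lambda>r. X r - t * b r)"
  have "(\<Sum>l<n. of_int (rootM r l) * rootMT_app C n y l) = 0" if "r \<in> rows C n" for r
  proof -
    have "rootMT_app C n X l = t * rootMT_app C n b l + rootMT_app C n y l" for l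
      unfolding rootMT_app_affine[symmetric] by (simp add: y_def)
    then show ?thesis
      using MX b that by (simp add: solves_MMT_def algebra_simps sum.distrib sum_distrib_left[symmetric])
  qed
  then have "(\<Sum>l<n. (rootMT_app C n y l)\<^sup>2) = 0"
    by (simp add: sum_rootMT_app_squares)
  then have "in_ker_MT C n y"
    by (simp add: in_ker_MT_def sum_nonneg_eq_0_iff)
  then show "\<exists>y. in_ker_MT C n y \<and> (\<forall>r\<in>rows C n. X r = t * b r + y r)"
    by (auto simp: y_def)
qed

context nice_nilpotent
begin

lemma Ric_eq_lam_plus_derivation_iff:
  assumes g: "diag_metric n g" and b: "solves_MMT C n b"
  shows "(\<exists>D. derivation C n D \<and> (\<forall>x\<in>vsp n. Ric C n g x = (\<lambda>i. lam * x i + D x i)))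
    \<longleftrightarrow> (\<exists>y. in_ker_MT C n y \<and> (\<forall>r\<in>rows C n. metric_vector C g r = -2 * lam * b r + y r))"
proof -
  define \<rho> where "\<rho> = (\<lambda>l. rootMT_app C n (metric_vector C g) l / 2)"
  let ?D = "diag_op n (\<lambda>l. \<rho> l - lam)"
  have Ric_iff: "Ric C n g x = (\<lambda>i. lam * x i + D x i) \<longleftrightarrow> D x = ?D x" if "x \<in> vsp n" for D x
    using that unfolding Ric_eq_diag_op[OF g] \<rho>_def[symmetric]
    by (auto simp: diag_op_def vsp_def fun_eq_iff algebra_simps)
  have "(\<exists>D. derivation C n D \<and> (\<forall>x\<in>vsp n. Ric C n g x = (\<lambda>i. lam * x i + D x i)))
      \<longleftrightarrow> derivation C n ?D"
  proof
    assume "\<exists>D. derivation C n D \<and> (\<forall>x\<in>vsp n. Ric C n g x = (\<lambda>i. lam * x i + D x i))"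
    then obtain D where D: "derivation C n D" "\<forall>x\<in>vsp n. D x = ?D x"
      using Ric_iff by blast
    then show "derivation C n ?D" using derivation_cong[OF lie] by blast
  next
    assume "derivation C n ?D"
    moreover have "\<forall>x\<in>vsp n. Ric C n g x = (\<lambda>i. lam * x i + ?D x i)"
      using Ric_iff by blast
    ultimately show "\<exists>D. derivation C n D \<and> (\<forall>x\<in>vsp n. Ric C n g x = (\<lambda>i. lam * x i + D x i))"
      by blast
  qed
  also have "\<dots> \<longleftrightarrow> (\<forall>(i, j, k)\<in>rows C n. \<rho> k - \<rho> i - \<rho> j = - lam)"
    unfolding derivation_diag_op_iff by (intro ball_cong refl) auto
  also have "\<dots> \<longleftrightarrow> (\<forall>r\<in>rows C n.
      (\<Sum>l<n. of_int (rootM r l) * rootMT_app C n (metric_vector C g) l) = -2 * lam)"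
    by (intro ball_cong refl) (auto simp: rows_def rootM_apply \<rho>_def)
  also have "\<dots> \<longleftrightarrow> (\<exists>y. in_ker_MT C n y \<and> (\<forall>r\<in>rows C n. metric_vector C g r = -2 * lam * b r + y r))"
    by (rule affine_kernel_iff[OF b, symmetric])
  finally show ?thesis .
qed

lemma exists_soliton_metric_iff:
  assumes b: "solves_MMT C n b"
  shows "(\<exists>g. diag_metric n g \<and> has_signature n g \<delta> \<and>
      (\<exists>D. derivation C n D \<and> (\<forall>x\<in>vsp n. Ric C n g x = (\<lambda>i. lam * x i + D x i))))
    \<longleftrightarrow> (\<exists>X. (\<exists>y. in_ker_MT C n y \<and> (\<forall>r\<in>rows C n. X r = -2 * lam * b r + y r))
      \<and> (\<exists>g. diag_metric n g \<and> has_signature n g \<delta> \<and> (\<forall>r\<in>rows C n. metric_vector C g r = X r)))"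
proof -
  have "(\<exists>g. diag_metric n g \<and> has_signature n g \<delta> \<and>
      (\<exists>D. derivation C n D \<and> (\<forall>x\<in>vsp n. Ric C n g x = (\<lambda>i. lam * x i + D x i))))
    \<longleftrightarrow> (\<exists>g. diag_metric n g \<and> has_signature n g \<delta> \<and>
      (\<exists>y. in_ker_MT C n y \<and> (\<forall>r\<in>rows C n. metric_vector C g r = -2 * lam * b r + y r)))"
    using Ric_eq_lam_plus_derivation_iff[OF _ b] by blast
  also have "\<dots> \<longleftrightarrow> (\<exists>X. (\<exists>y. in_ker_MT C n y \<and> (\<forall>r\<in>rows C n. X r = -2 * lam * b r + y r))
      \<and> (\<exists>g. diag_metric n g \<and> has_signature n g \<delta> \<and> (\<forall>r\<in>rows C n. metric_vector C g r = X r)))"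
    by auto blast
  finally show ?thesis .
qed

end

section \<open>The Fredholm alternative and integer kernel bases\<close>

lemma sum_mult_diff_scaled:
  "(\<Sum>r\<in>R. f r * (y r - c * z r)) = (\<Sum>r\<in>R. f r * y r) - c * (\<Sum>r\<in>R. f r * (z r :: real))"
  by (simp add: algebra_simps sum_subtractf sum_distrib_left)

lemma kernel_functional_multiple:
  fixes A :: "'l \<Rightarrow> 'r \<Rightarrow> real"
  assumes "\<forall>y. (\<forall>l\<in>L. (\<Sum>r\<in>R. A l r * y r) = 0) \<and> (\<Sum>r\<in>R. a r * y r) = 0
      \<longrightarrow> (\<Sum>r\<in>R. w r * y r) = 0"
  shows "\<exists>t. \<forall>y. (\<forall>l\<in>L. (\<Sum>r\<in>R. A l r * y r) = 0)
      \<longrightarrow> (\<Sum>r\<in>R. w r * y r) = t * (\<Sum>r\<in>R. a r * y r)"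
proof (cases "\<exists>y0. (\<forall>l\<in>L. (\<Sum>r\<in>R. A l r * y0 r) = 0) \<and> (\<Sum>r\<in>R. a r * y0 r) \<noteq> 0")
  case True
  then obtain y0 where y0: "\<forall>l\<in>L. (\<Sum>r\<in>R. A l r * y0 r) = 0" "(\<Sum>r\<in>R. a r * y0 r) \<noteq> 0"
    by blast
  let ?s = "\<Sum>r\<in>R. a r * y0 r"
  show ?thesis
  proof (intro exI allI impI)
    fix y assume y: "\<forall>l\<in>L. (\<Sum>r\<in>R. A l r * y r) = 0"
    let ?c = "(\<Sum>r\<in>R. a r * y r) / ?s"
    have "\<forall>l\<in>L. (\<Sum>r\<in>R. A l r * (y r - ?c * y0 r)) = 0"
      using y y0 by (simp only: sum_mult_diff_scaled) simp
    moreover have "(\<Sum>r\<in>R. a r * (y r - ?c * y0 r)) = 0"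
      using y0(2) by (simp only: sum_mult_diff_scaled) simp
    ultimately have "(\<Sum>r\<in>R. w r * (y r - ?c * y0 r)) = 0"
      using assms[rule_format, of "\<lambda>r. y r - ?c * y0 r"] by blast
    then show "(\<Sum>r\<in>R. w r * y r) = (\<Sum>r\<in>R. w r * y0 r) / ?s * (\<Sum>r\<in>R. a r * y r)"
      using y0(2) by (simp only: sum_mult_diff_scaled) (simp add: field_simps)
  qed
next
  case False
  then show ?thesis using assms by (intro exI[of _ 0]) auto
qed

lemma orthogonal_kernel_imp_row_space:
  fixes A :: "'l \<Rightarrow> 'r \<Rightarrow> real"
  assumes "finite R" "finite L"
    and "\<forall>y. (\<forall>l\<in>L. (\<Sum>r\<in>R. A l r * y r) = 0) \<longrightarrow> (\<Sum>r\<in>R. w r * y r) = 0"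
  shows "\<exists>u. \<forall>r\<in>R. w r = (\<Sum>l\<in>L. A l r * u l)"
  using assms(2,3)
proof (induction L arbitrary: w rule: finite_induct)
  case empty
  then have "(\<Sum>r\<in>R. w r * w r) = 0" by simp
  then show ?case using assms(1) by (simp add: sum_nonneg_eq_0_iff)
next
  case (insert l0 L)
  have "\<forall>y. (\<forall>l\<in>L. (\<Sum>r\<in>R. A l r * y r) = 0) \<and> (\<Sum>r\<in>R. A l0 r * y r) = 0
      \<longrightarrow> (\<Sum>r\<in>R. w r * y r) = 0"
    using insert.prems by simp
  then obtain t where t: "\<forall>y. (\<forall>l\<in>L. (\<Sum>r\<in>R. A l r * y r) = 0)
      \<longrightarrow> (\<Sum>r\<in>R. w r * y r) = t * (\<Sum>r\<in>R. A l0 r * y r)"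
    by (blast dest: kernel_functional_multiple)
  have "\<forall>y. (\<forall>l\<in>L. (\<Sum>r\<in>R. A l r * y r) = 0) \<longrightarrow> (\<Sum>r\<in>R. (w r - t * A l0 r) * y r) = 0"
    using t by (simp add: left_diff_distrib sum_subtractf sum_distrib_left mult.assoc)
  then obtain u where u: "\<forall>r\<in>R. w r - t * A l0 r = (\<Sum>l\<in>L. A l r * u l)"
    using insert.IH[of "\<lambda>r. w r - t * A l0 r"] by blast
  have "w r = (\<Sum>l\<in>insert l0 L. A l r * (u(l0 := t)) l)" if "r \<in> R" for r
  proof -
    have "(\<Sum>l\<in>L. A l r * (u(l0 := t)) l) = (\<Sum>l\<in>L. A l r * u l)"
      using insert.hyps by (intro sum.cong) auto
    then show ?thesis using u that insert.hyps by (simp add: algebra_simps)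
  qed
  then show ?case by blast
qed

definition int_kernel_basis ::
    "('l \<Rightarrow> 'r \<Rightarrow> int) \<Rightarrow> 'r set \<Rightarrow> 'l set \<Rightarrow> 'i set \<Rightarrow> ('i \<Rightarrow> 'r \<Rightarrow> int) \<Rightarrow> bool" where
  "int_kernel_basis A R L I \<beta> \<longleftrightarrow> finite I \<and>
     (\<forall>i\<in>I. \<forall>l\<in>L. (\<Sum>r\<in>R. of_int (A l r) * of_int (\<beta> i r)) = (0::real)) \<and>
     (\<forall>t. (\<forall>r\<in>R. (\<Sum>i\<in>I. t i * of_int (\<beta> i r)) = (0::real)) \<longrightarrow> (\<forall>i\<in>I. t i = 0)) \<and>
     (\<forall>y. (\<forall>l\<in>L. (\<Sum>r\<in>R. of_int (A l r) * y r) = (0::real))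
        \<longrightarrow> (\<exists>t. \<forall>r\<in>R. y r = (\<Sum>i\<in>I. t i * of_int (\<beta> i r))))"

lemma int_kernel_basis_empty:
  fixes A :: "'l \<Rightarrow> 'r \<Rightarrow> int" and R :: "'r set"
  assumes "finite R"
  shows "int_kernel_basis A R {} R (\<lambda>i r. if r = i then 1 else 0)"
  unfolding int_kernel_basis_def
proof (intro conjI allI impI ballI)
  fix t :: "'r \<Rightarrow> real" and i
  assume "\<forall>r\<in>R. (\<Sum>i\<in>R. t i * of_int (if r = i then 1 else 0)) = 0" and "i \<in> R"
  then show "t i = 0" using assms by (auto simp: if_distrib cong: if_cong)
next
  fix y :: "'r \<Rightarrow> real"
  show "\<exists>t. \<forall>r\<in>R. y r = (\<Sum>i\<in>R. t i * of_int (if r = i then 1 else 0))"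
    using assms by (intro exI[of _ y]) (auto simp: if_distrib cong: if_cong)
qed (use assms in auto)

lemma int_kernel_basis_insert_orthogonal:
  assumes "int_kernel_basis A R L I \<beta>" and "\<forall>i\<in>I. (\<Sum>r\<in>R. A l0 r * \<beta> i r) = 0"
  shows "int_kernel_basis A R (insert l0 L) I \<beta>"
  using assms unfolding int_kernel_basis_def by (auto simp flip: of_int_mult of_int_sum)

(* One step of fraction-free Gaussian elimination: a annihilates every pivot_elim a R beta i0 i. *)
definition pivot_elim :: "('r \<Rightarrow> int) \<Rightarrow> 'r set \<Rightarrow> ('i \<Rightarrow> 'r \<Rightarrow> int) \<Rightarrow> 'i \<Rightarrow> 'i \<Rightarrow> 'r \<Rightarrow> int" where
  "pivot_elim a R \<beta> i0 i r = (\<Sum>q\<in>R. a q * \<beta> i0 q) * \<beta> i r - (\<Sum>q\<in>R. a q * \<beta> i q) * \<beta> i0 r"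

context
  fixes A :: "'l \<Rightarrow> 'r \<Rightarrow> int" and R :: "'r set" and L :: "'l set" and I :: "'i set"
    and \<beta> :: "'i \<Rightarrow> 'r \<Rightarrow> int" and l0 :: 'l and i0 :: 'i
  assumes basis: "int_kernel_basis A R L I \<beta>" and i0: "i0 \<in> I"
    and pivot: "(\<Sum>r\<in>R. A l0 r * \<beta> i0 r) \<noteq> 0"
begin

private abbreviation "a i \<equiv> \<Sum>r\<in>R. A l0 r * \<beta> i r"
private abbreviation "\<beta>' \<equiv> pivot_elim (A l0) R \<beta> i0"

private lemma finite_basis_index: "finite I"
  using basis by (simp add: int_kernel_basis_def)

private lemma pivot_real_nonzero: "of_int (a i0) \<noteq> (0::real)"
  using pivot by (simp only: of_int_eq_0_iff not_False_eq_True)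

private lemma pairing_pivot_elim:
  "(\<Sum>r\<in>R. of_int (A l r) * real_of_int (\<beta>' i r))
    = of_int (a i0) * (\<Sum>r\<in>R. of_int (A l r) * of_int (\<beta> i r))
      - of_int (a i) * (\<Sum>r\<in>R. of_int (A l r) * of_int (\<beta> i0 r))"
  unfolding pivot_elim_def of_int_diff of_int_mult sum_distrib_left sum_subtractf[symmetric]
  by (intro sum.cong refl) (simp add: algebra_simps del: of_int_sum)

private lemma combination_pivot_elim:
  "(\<Sum>i\<in>I - {i0}. t i * real_of_int (\<beta>' i r))
    = (\<Sum>i\<in>I - {i0}. (of_int (a i0) * t i) * of_int (\<beta> i r))
      - (\<Sum>i\<in>I - {i0}. t i * of_int (a i)) * of_int (\<beta> i0 r)"
  unfolding pivot_elim_def of_int_diff of_int_mult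
  by (simp add: right_diff_distrib sum_subtractf sum_distrib_left sum_distrib_right mult_ac
      del: of_int_sum)

lemma pivot_elim_in_kernel:
  assumes "i \<in> I - {i0}" "l \<in> insert l0 L"
  shows "(\<Sum>r\<in>R. of_int (A l r) * real_of_int (\<beta>' i r)) = 0"
  using assms basis i0 unfolding pairing_pivot_elim int_kernel_basis_def
  by (auto simp flip: of_int_mult of_int_sum)

lemma pivot_elim_independent:
  assumes comb: "\<forall>r\<in>R. (\<Sum>i\<in>I - {i0}. t i * real_of_int (\<beta>' i r)) = 0" and i: "i \<in> I - {i0}"
  shows "t i = 0"
proof -
  define t' where "t' j = (if j = i0 then - (\<Sum>j\<in>I - {i0}. t j * of_int (a j)) else of_int (a i0) * t j)"
    for j
  have "(\<Sum>j\<in>I. t' j * of_int (\<beta> j r)) = (\<Sum>j\<in>I - {i0}. t j * real_of_int (\<beta>' j r))" for r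
  proof -
    have "(\<Sum>j\<in>I. t' j * of_int (\<beta> j r))
        = t' i0 * of_int (\<beta> i0 r) + (\<Sum>j\<in>I - {i0}. t' j * of_int (\<beta> j r))"
      using finite_basis_index i0 by (simp add: sum.remove)
    also have "(\<Sum>j\<in>I - {i0}. t' j * of_int (\<beta> j r))
        = (\<Sum>j\<in>I - {i0}. (of_int (a i0) * t j) * of_int (\<beta> j r))"
      by (intro sum.cong) (auto simp: t'_def)
    finally show ?thesis
      unfolding combination_pivot_elim by (simp add: t'_def)
  qed
  then have "t' i = 0"
    using basis comb i unfolding int_kernel_basis_def by auto
  then show "t i = 0" using i pivot_real_nonzero by (simp add: t'_def)
qed

lemma pivot_elim_spanning:
  assumes y: "\<forall>l\<in>insert l0 L. (\<Sum>r\<in>R. of_int (A l r) * y r) = 0"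
  shows "\<exists>t. \<forall>r\<in>R. y r = (\<Sum>i\<in>I - {i0}. t i * real_of_int (\<beta>' i r))"
proof -
  have "\<forall>l\<in>L. (\<Sum>r\<in>R. of_int (A l r) * y r) = 0" using y by simp
  then obtain t where t: "\<forall>r\<in>R. y r = (\<Sum>i\<in>I. t i * of_int (\<beta> i r))"
    using basis unfolding int_kernel_basis_def by blast
  have "(\<Sum>i\<in>I. t i * of_int (a i)) = (\<Sum>r\<in>R. of_int (A l0 r) * y r)"
    using t by (simp add: sum_distrib_left sum_distrib_right sum.swap[of _ I] mult_ac)
  also have "\<dots> = 0" using y by simp
  finally have "(\<Sum>i\<in>I - {i0}. t i * of_int (a i)) = - t i0 * of_int (a i0)"
    using finite_basis_index i0 by (simp add: sum.remove)
  then have "(\<Sum>i\<in>I - {i0}. t i / of_int (a i0) * of_int (a i)) = - t i0"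
    using pivot_real_nonzero by (simp add: sum_divide_distrib[symmetric])
  then have "y r = (\<Sum>i\<in>I - {i0}. (t i / of_int (a i0)) * real_of_int (\<beta>' i r))" if "r \<in> R" for r
    unfolding combination_pivot_elim using t that finite_basis_index i0 pivot_real_nonzero
    by (simp add: sum.remove)
  then show ?thesis
    by (intro exI[of _ "\<lambda>i. t i / of_int (a i0)"]) blast
qed

lemma int_kernel_basis_pivot: "int_kernel_basis A R (insert l0 L) (I - {i0}) \<beta>'"
  unfolding int_kernel_basis_def
  using finite_basis_index pivot_elim_in_kernel pivot_elim_independent pivot_elim_spanning
  by blast

end

lemma int_kernel_basis_exists:
  fixes A :: "'l \<Rightarrow> 'r \<Rightarrow> int"
  assumes "finite R" "finite L"
  shows "\<exists>I (\<beta> :: 'r \<Rightarrow> 'r \<Rightarrow> int). int_kernel_basis A R L I \<beta>"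
  using assms(2)
proof (induction L rule: finite_induct)
  case empty
  show ?case using int_kernel_basis_empty[OF assms(1)] by blast
next
  case (insert l0 L)
  then obtain I and \<beta> :: "'r \<Rightarrow> 'r \<Rightarrow> int" where basis: "int_kernel_basis A R L I \<beta>"
    by blast
  show ?case
  proof (cases "\<exists>i0\<in>I. (\<Sum>r\<in>R. A l0 r * \<beta> i0 r) \<noteq> 0")
    case True
    then show ?thesis using int_kernel_basis_pivot[OF basis] by blast
  next
    case False
    then show ?thesis using int_kernel_basis_insert_orthogonal[OF basis] by blast
  qed
qed

lemma int_kernel_basis_reindex:
  fixes A :: "'l \<Rightarrow> 'r \<Rightarrow> int" and \<beta> :: "'i \<Rightarrow> 'r \<Rightarrow> int" and h :: "'j \<Rightarrow> 'i"
  assumes h: "bij_betw h J I" and basis: "int_kernel_basis A R L I \<beta>"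
  shows "int_kernel_basis A R L J (\<lambda>j. \<beta> (h j))"
proof -
  have reindex: "(\<Sum>j\<in>J. t (h j) * of_int (\<beta> (h j) r)) = (\<Sum>i\<in>I. t i * of_int (\<beta> i r))"
    for t :: "'i \<Rightarrow> real" and r
    using sum.reindex_bij_betw[OF h, of "\<lambda>i. t i * of_int (\<beta> i r)"] .
  have inv: "inv_into J h (h j) = j" if "j \<in> J" for j
    using h that by (simp add: bij_betw_def)
  show ?thesis
    unfolding int_kernel_basis_def
  proof (intro conjI allI impI ballI)
    show "finite J" using h basis bij_betw_finite by (auto simp: int_kernel_basis_def)
  next
    fix j l assume "j \<in> J" "l \<in> L"
    then show "(\<Sum>r\<in>R. of_int (A l r) * of_int (\<beta> (h j) r)) = (0::real)"
      using h basis by (auto simp: bij_betw_def int_kernel_basis_def)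
  next
    fix t :: "'j \<Rightarrow> real" and j
    assume "\<forall>r\<in>R. (\<Sum>j\<in>J. t j * of_int (\<beta> (h j) r)) = 0" and j: "j \<in> J"
    then have "\<forall>r\<in>R. (\<Sum>i\<in>I. t (inv_into J h i) * of_int (\<beta> i r)) = 0"
      using reindex[of "\<lambda>i. t (inv_into J h i)"] inv by (simp cong: sum.cong)
    then have "t (inv_into J h (h j)) = 0"
      using basis h j by (auto simp: int_kernel_basis_def bij_betw_def)
    then show "t j = 0" using inv[OF j] by simp
  next
    fix y :: "'r \<Rightarrow> real"
    assume "\<forall>l\<in>L. (\<Sum>r\<in>R. of_int (A l r) * y r) = 0"
    then obtain t where "\<forall>r\<in>R. y r = (\<Sum>i\<in>I. t i * of_int (\<beta> i r))"
      using basis unfolding int_kernel_basis_def by blast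
    then show "\<exists>t. \<forall>r\<in>R. y r = (\<Sum>j\<in>J. t j * of_int (\<beta> (h j) r))"
      using reindex by (intro exI[of _ "\<lambda>j. t (h j)"]) simp
  qed
qed

lemma int_basis_ker_MT_iff:
  "int_basis_ker_MT C n k \<alpha> \<longleftrightarrow> int_kernel_basis (\<lambda>l r. rootM r l) (rows C n) {..<n} {..<k} \<alpha>"
  by (simp add: int_basis_ker_MT_def int_kernel_basis_def in_ker_MT_def rootMT_app_def Ball_def)

lemma int_basis_ker_MT_exists: "\<exists>k \<alpha>. int_basis_ker_MT C n k \<alpha>"
proof -
  obtain I and \<beta> :: "row \<Rightarrow> row \<Rightarrow> int"
    where basis: "int_kernel_basis (\<lambda>l r. rootM r l) (rows C n) {..<n} I \<beta>"
    using int_kernel_basis_exists[OF finite_rows finite_lessThan] by blast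
  then obtain h where "bij_betw h {..<card I} I"
    using ex_bij_betw_nat_finite[of I] by (auto simp: int_kernel_basis_def lessThan_atLeast0)
  from int_kernel_basis_reindex[OF this basis] show ?thesis
    unfolding int_basis_ker_MT_iff by blast
qed

section \<open>Diagonal metrics realizing a given vector X\<close>

lemma logsign_metric_vector:
  assumes g: "diag_metric n g" and sig: "has_signature n g \<delta>" and r: "r \<in> rows C n"
  shows "logsign (metric_vector C g) r = (\<Sum>l<n. rootM r l * \<delta> l) mod 2"
proof -
  obtain i j k where r_eq: "r = (i, j, k)" by (cases r)
  have ijk: "i < n" "j < n" "k < n" "C i j k \<noteq> 0" using r by (simp_all add: r_eq rows_def)
  have gi: "g i \<noteq> 0" "g j \<noteq> 0" "g k \<noteq> 0" using g ijk by (auto simp: diag_metric_def)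
  have \<delta>: "\<delta> i = (if g i > 0 then 0 else 1)" "\<delta> j = (if g j > 0 then 0 else 1)"
    "\<delta> k = (if g k > 0 then 0 else 1)"
    using sig ijk by (auto simp: has_signature_def)
  have "(\<Sum>l<n. rootM r l * \<delta> l) = \<delta> k - \<delta> i - \<delta> j"
    using rootM_apply[OF ijk(1-3), of \<delta>] by (simp add: r_eq)
  moreover have "metric_vector C g r = (C i j k)\<^sup>2 * (g k / (g i * g j))"
    by (simp add: r_eq metric_vector_def)
  moreover have "(C i j k)\<^sup>2 > 0" using ijk by simp
  ultimately show ?thesis
    using gi unfolding logsign_def \<delta>
    by (cases "g i > 0"; cases "g j > 0"; cases "g k > 0")
      (auto simp: zero_less_mult_iff zero_less_divide_iff linorder_not_less order_le_less)
qed

lemma metric_vector_nonzero: "diag_metric n g \<Longrightarrow> r \<in> rows C n \<Longrightarrow> metric_vector C g r \<noteq> 0"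
  by (auto simp: metric_vector_def rows_def diag_metric_def)

lemma prod_powi_eq_powi_sum:
  assumes "(x::real) \<noteq> 0" "finite S"
  shows "(\<Prod>r\<in>S. x powi f r) = x powi (\<Sum>r\<in>S. f r)"
  using assms(2) by (induction S rule: finite_induct) (simp_all add: power_int_add assms(1))

lemma metric_vector_powi:
  assumes g: "\<forall>l<n. g l \<noteq> 0" and r: "r \<in> rows C n"
  shows "metric_vector C g r powi a = cvec C r powi (2 * a) * (\<Prod>l<n. g l powi (rootM r l * a))"
proof -
  obtain i j k where r_eq: "r = (i, j, k)" by (cases r)
  have ijk: "i < j" "j < n" "k < n" using r by (simp_all add: r_eq rows_def)
  have "g l powi (rootM r l * a) = (if l = k then g l powi a else 1)
      * (if l = i then g l powi (- a) else 1) * (if l = j then g l powi (- a) else 1)"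
    if "l < n" for l
    using g that ijk by (auto simp: r_eq rootM_def power_int_add[symmetric])
  then have "(\<Prod>l<n. g l powi (rootM r l * a)) = g k powi a * g i powi (- a) * g j powi (- a)"
    using ijk by (simp add: prod.distrib)
  moreover have "metric_vector C g r powi a
      = ((cvec C r)\<^sup>2) powi a * g k powi a * g i powi (- a) * g j powi (- a)"
    by (simp add: r_eq metric_vector_def cvec_def divide_inverse power_int_mult_distrib
        power_int_minus power_int_inverse)
  moreover have "((cvec C r)\<^sup>2) powi a = cvec C r powi (2 * a)"
    by (simp add: power_int_power)
  ultimately show ?thesis
    by (simp add: mult_ac)
qed

lemma metric_vector_monomial:
  assumes g: "\<forall>l<n. g l \<noteq> 0" and \<alpha>: "in_ker_MT C n (\<lambda>r. of_int (\<alpha> r))"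
  shows "(\<Prod>r\<in>rows C n. metric_vector C g r powi \<alpha> r) = (\<Prod>r\<in>rows C n. cvec C r powi (2 * \<alpha> r))"
proof -
  have "(\<Prod>r\<in>rows C n. metric_vector C g r powi \<alpha> r)
      = (\<Prod>r\<in>rows C n. cvec C r powi (2 * \<alpha> r)) * (\<Prod>r\<in>rows C n. \<Prod>l<n. g l powi (rootM r l * \<alpha> r))"
    using g by (simp add: metric_vector_powi prod.distrib)
  also have "(\<Prod>r\<in>rows C n. \<Prod>l<n. g l powi (rootM r l * \<alpha> r))
      = (\<Prod>l<n. g l powi (\<Sum>r\<in>rows C n. rootM r l * \<alpha> r))"
    using g finite_rows by (subst prod.swap) (simp add: prod_powi_eq_powi_sum)
  also have "\<dots> = 1"
  proof (rule prod.neutral, rule ballI)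
    fix l assume "l \<in> {..<n}"
    then have "real_of_int (\<Sum>r\<in>rows C n. rootM r l * \<alpha> r) = 0"
      using \<alpha> by (simp add: in_ker_MT_def rootMT_app_def)
    then show "g l powi (\<Sum>r\<in>rows C n. rootM r l * \<alpha> r) = 1"
      by (simp only: of_int_eq_0_iff) simp
  qed
  finally show ?thesis by simp
qed

lemma metric_vector_realizes:
  assumes \<delta>: "\<forall>i<n. \<delta> i \<in> {0, 1}" and nz: "\<forall>r\<in>rows C n. X r \<noteq> 0"
    and sign: "\<forall>r\<in>rows C n. logsign X r = (\<Sum>l<n. rootM r l * \<delta> l) mod 2"
    and u: "\<forall>r\<in>rows C n. ln \<bar>X r\<bar> - ln ((cvec C r)\<^sup>2) = (\<Sum>l<n. of_int (rootM r l) * u l)"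
  shows "\<exists>g. diag_metric n g \<and> has_signature n g \<delta> \<and> (\<forall>r\<in>rows C n. metric_vector C g r = X r)"
proof -
  define s :: "nat \<Rightarrow> real" where "s l = (if \<delta> l = 0 then 1 else -1)" for l
  define g where "g l = s l * exp (u l)" for l
  have "diag_metric n g"
    by (simp add: diag_metric_def g_def s_def)
  moreover have "has_signature n g \<delta>"
    using \<delta> by (auto simp: has_signature_def g_def s_def)
  moreover have "metric_vector C g r = X r" if r: "r \<in> rows C n" for r
  proof -
    obtain i j k where r_eq: "r = (i, j, k)" by (cases r)
    have ijk: "i < n" "j < n" "k < n" "C i j k \<noteq> 0" using r by (simp_all add: r_eq rows_def)
    have "ln \<bar>X r\<bar> - ln ((C i j k)\<^sup>2) = u k - u i - u j"
      using bspec[OF u r] rootM_apply[OF ijk(1-3), of u] by (simp add: r_eq cvec_def)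
    then have "exp (ln \<bar>X r\<bar> - ln ((C i j k)\<^sup>2)) = exp (u k) / (exp (u i) * exp (u j))"
      by (simp add: exp_diff)
    moreover have "exp (ln \<bar>X r\<bar> - ln ((C i j k)\<^sup>2)) = \<bar>X r\<bar> / (C i j k)\<^sup>2"
      using nz r ijk by (simp add: exp_diff)
    ultimately have "\<bar>X r\<bar> / (C i j k)\<^sup>2 = exp (u k) / (exp (u i) * exp (u j))"
      by simp
    then have abs_X: "\<bar>X r\<bar> = (C i j k)\<^sup>2 * (exp (u k) / (exp (u i) * exp (u j)))"
      using ijk by (simp add: field_simps)
    have "logsign X r = (\<delta> k - \<delta> i - \<delta> j) mod 2"
      using bspec[OF sign r] rootM_apply[OF ijk(1-3), of \<delta>] by (simp add: r_eq)
    moreover have "\<delta> i \<in> {0, 1}" "\<delta> j \<in> {0, 1}" "\<delta> k \<in> {0, 1}"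
      using \<delta> ijk by auto
    ultimately have "X r = s k * s i * s j * \<bar>X r\<bar>"
      using bspec[OF nz r] unfolding logsign_def s_def by (auto split: if_splits)
    moreover have "metric_vector C g r
        = s k * s i * s j * ((C i j k)\<^sup>2 * (exp (u k) / (exp (u i) * exp (u j))))"
      by (simp add: r_eq metric_vector_def g_def s_def field_simps)
    ultimately show ?thesis
      using abs_X by simp
  qed
  ultimately show ?thesis by blast
qed

lemma ln_powi: "(x::real) > 0 \<Longrightarrow> ln (x powi a) = of_int a * ln x"
  by (simp add: powr_real_of_int'[symmetric])

lemma monomial_eq_imp_log_orthogonal:
  fixes x c :: "'r \<Rightarrow> real"
  assumes S: "finite S" and x: "\<forall>r\<in>S. x r \<noteq> 0" and c: "\<forall>r\<in>S. c r \<noteq> 0"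
    and eq: "(\<Prod>r\<in>S. x r powi a r) = (\<Prod>r\<in>S. c r powi (2 * a r))"
  shows "(\<Sum>r\<in>S. of_int (a r) * (ln \<bar>x r\<bar> - ln ((c r)\<^sup>2))) = 0"
proof -
  have "(\<Prod>r\<in>S. \<bar>x r\<bar> powi a r) = (\<Prod>r\<in>S. \<bar>c r\<bar> powi (2 * a r))"
    using arg_cong[OF eq, of abs] by (simp add: abs_prod power_int_abs)
  then have "ln (\<Prod>r\<in>S. \<bar>x r\<bar> powi a r) = ln (\<Prod>r\<in>S. \<bar>c r\<bar> powi (2 * a r))"
    by simp
  then have "(\<Sum>r\<in>S. of_int (a r) * ln \<bar>x r\<bar>) = (\<Sum>r\<in>S. of_int (2 * a r) * ln \<bar>c r\<bar>)"
    using S x c by (simp add: ln_prod ln_powi)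
  moreover have "ln ((c r)\<^sup>2) = 2 * ln \<bar>c r\<bar>" if "r \<in> S" for r
    using c that ln_realpow[of "\<bar>c r\<bar>" 2] by simp
  ultimately show ?thesis
    by (simp add: right_diff_distrib sum_subtractf mult_ac)
qed

lemma log_ratio_in_range:
  assumes basis: "int_basis_ker_MT C n k \<alpha>"
    and P: "\<forall>i<k. (\<Prod>r\<in>rows C n. X r powi \<alpha> i r) = (\<Prod>r\<in>rows C n. cvec C r powi (2 * \<alpha> i r))"
    and nz: "\<forall>r\<in>rows C n. X r \<noteq> 0"
  shows "\<exists>u. \<forall>r\<in>rows C n. ln \<bar>X r\<bar> - ln ((cvec C r)\<^sup>2) = (\<Sum>l<n. of_int (rootM r l) * u l)"
proof -
  define w where "w r = ln \<bar>X r\<bar> - ln ((cvec C r)\<^sup>2)" for r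
  have c: "\<forall>r\<in>rows C n. cvec C r \<noteq> 0" by (auto simp: rows_def cvec_def)
  have "(\<Sum>r\<in>rows C n. w r * y r) = 0"
    if "\<forall>l\<in>{..<n}. (\<Sum>r\<in>rows C n. of_int (rootM r l) * y r) = 0" for y
  proof -
    have "in_ker_MT C n y"
      using that by (simp add: in_ker_MT_def rootMT_app_def)
    then obtain t where t: "\<forall>r\<in>rows C n. y r = (\<Sum>i<k. t i * of_int (\<alpha> i r))"
      using basis unfolding int_basis_ker_MT_def by blast
    have "(\<Sum>r\<in>rows C n. w r * y r) = (\<Sum>i<k. t i * (\<Sum>r\<in>rows C n. of_int (\<alpha> i r) * w r))"
      using t by (simp add: sum_distrib_left sum_distrib_right sum.swap[of _ "{..<k}"] mult_ac)
    also have "\<dots> = 0"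
      using monomial_eq_imp_log_orthogonal[OF finite_rows nz c] P by (simp add: w_def mult_ac)
    finally show ?thesis .
  qed
  then show ?thesis
    using orthogonal_kernel_imp_row_space[OF finite_rows finite_lessThan,
        where A = "\<lambda>l r. of_int (rootM r l)" and w = w]
    by (simp add: w_def)
qed

lemma metric_vector_image_iff:
  assumes \<delta>: "\<forall>i<n. \<delta> i \<in> {0, 1}" and basis: "int_basis_ker_MT C n k \<alpha>"
  shows "(\<exists>g. diag_metric n g \<and> has_signature n g \<delta> \<and> (\<forall>r\<in>rows C n. metric_vector C g r = X r))
    \<longleftrightarrow> (\<forall>r\<in>rows C n. X r \<noteq> 0)
      \<and> (\<forall>r\<in>rows C n. logsign X r = (\<Sum>l<n. rootM r l * \<delta> l) mod 2)
      \<and> (\<forall>i<k. (\<Prod>r\<in>rows C n. X r powi \<alpha> i r) = (\<Prod>r\<in>rows C n. cvec C r powi (2 * \<alpha> i r)))"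
    (is "_ \<longleftrightarrow> ?nonzero \<and> ?sign \<and> ?monomial")
proof
  assume "\<exists>g. diag_metric n g \<and> has_signature n g \<delta> \<and> (\<forall>r\<in>rows C n. metric_vector C g r = X r)"
  then obtain g where g: "diag_metric n g" "has_signature n g \<delta>"
    and X: "\<forall>r\<in>rows C n. metric_vector C g r = X r"
    by blast
  have ?nonzero
    using X metric_vector_nonzero[OF g(1)] by metis
  moreover have ?sign
  proof
    fix r assume r: "r \<in> rows C n"
    with X logsign_metric_vector[OF g r] show "logsign X r = (\<Sum>l<n. rootM r l * \<delta> l) mod 2"
      by (simp add: logsign_def)
  qed
  moreover have ?monomial
  proof (intro allI impI)
    fix i assume "i < k"
    then have "(\<Prod>r\<in>rows C n. metric_vector C g r powi \<alpha> i r) = (\<Prod>r\<in>rows C n. cvec C r powi (2 * \<alpha> i r))"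
      using g(1) basis by (intro metric_vector_monomial) (auto simp: diag_metric_def int_basis_ker_MT_def)
    with X show "(\<Prod>r\<in>rows C n. X r powi \<alpha> i r) = (\<Prod>r\<in>rows C n. cvec C r powi (2 * \<alpha> i r))"
      by simp
  qed
  ultimately show "?nonzero \<and> ?sign \<and> ?monomial" by blast
next
  assume "?nonzero \<and> ?sign \<and> ?monomial"
  then have nz: ?nonzero and sign: ?sign and mono: ?monomial by blast+
  obtain u where "\<forall>r\<in>rows C n. ln \<bar>X r\<bar> - ln ((cvec C r)\<^sup>2) = (\<Sum>l<n. of_int (rootM r l) * u l)"
    using log_ratio_in_range[OF basis mono nz] by blast
  from metric_vector_realizes[OF \<delta> nz sign this]
  show "\<exists>g. diag_metric n g \<and> has_signature n g \<delta> \<and> (\<forall>r\<in>rows C n. metric_vector C g r = X r)" .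
qed

theorem corollary1p6:
  fixes C :: sconst and n :: nat and b :: "row \<Rightarrow> real" and lam :: real
    and \<delta> :: "nat \<Rightarrow> int"
  assumes "lie_algebra C n" and "nice C n" and "nilpotent C n"
    and "solves_MMT C n b"
    and "\<forall>i<n. \<delta> i \<in> {0, 1}"
  defines "A \<equiv> (\<exists>g. diag_metric n g \<and> has_signature n g \<delta> \<and>
              (\<exists>D. derivation C n D \<and> (\<forall>x\<in>vsp n. Ric C n g x = (\<lambda>i. lam * x i + D x i))))"
    and "KHL \<equiv> (\<lambda>X. (\<exists>y. in_ker_MT C n y \<and> (\<forall>r\<in>rows C n. X r = -2 * lam * b r + y r)) \<and>
              (\<forall>r\<in>rows C n. X r \<noteq> 0) \<and>
              (\<forall>r\<in>rows C n. logsign X r = (\<Sum>l<n. rootM r l * \<delta> l) mod 2))"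
    and "P \<equiv> (\<lambda>X k \<alpha>. \<forall>i<k. (\<Prod>r\<in>rows C n. X r powi \<alpha> i r)
                          = (\<Prod>r\<in>rows C n. cvec C r powi (2 * \<alpha> i r)))"
  shows "(A \<longleftrightarrow> (\<exists>X. KHL X \<and> (\<exists>k \<alpha>. int_basis_ker_MT C n k \<alpha> \<and> P X k \<alpha>)))
       \<and> (A \<longleftrightarrow> (\<exists>X. KHL X \<and> (\<forall>k \<alpha>. int_basis_ker_MT C n k \<alpha> \<longrightarrow> P X k \<alpha>)))"
proof -
  interpret nice_nilpotent C n using assms(1-3) by unfold_locales
  have per_basis: "A \<longleftrightarrow> (\<exists>X. KHL X \<and> P X k \<alpha>)" if basis: "int_basis_ker_MT C n k \<alpha>" for k \<alpha>
    unfolding A_def exists_soliton_metric_iff[OF assms(4)] KHL_def P_def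
      metric_vector_image_iff[OF assms(5) basis] by blast
  have basis_independent: "P X k' \<alpha>'" if "KHL X" "int_basis_ker_MT C n k \<alpha>" "P X k \<alpha>"
    and basis': "int_basis_ker_MT C n k' \<alpha>'" for X k \<alpha> k' \<alpha>'
  proof -
    have "\<exists>g. diag_metric n g \<and> has_signature n g \<delta> \<and> (\<forall>r\<in>rows C n. metric_vector C g r = X r)"
      using that(1,3) unfolding metric_vector_image_iff[OF assms(5) that(2)] KHL_def P_def by blast
    then show ?thesis
      unfolding metric_vector_image_iff[OF assms(5) basis'] P_def by blast
  qed
  obtain k \<alpha> where basis: "int_basis_ker_MT C n k \<alpha>" using int_basis_ker_MT_exists by blast
  have "A \<longleftrightarrow> (\<exists>X. KHL X \<and> (\<exists>k \<alpha>. int_basis_ker_MT C n k \<alpha> \<and> P X k \<alpha>))"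
    using per_basis basis by blast
  moreover have "A \<longleftrightarrow> (\<exists>X. KHL X \<and> (\<forall>k \<alpha>. int_basis_ker_MT C n k \<alpha> \<longrightarrow> P X k \<alpha>))"
    using per_basis[OF basis] basis_independent basis by blast
  ultimately show ?thesis ..
qed
end
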